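(* Let $s\in(0,1)$ and let $K:\mathbb{R}\to[0,+\infty]$ be measurable with $K(x)=K(-x)$ for a.e. $x$ and $\lambda|x|^{-1-2s}\le K(x)\le\Lambda|x|^{-1-2s}$ for a.e. $x$, for some $0<\lambda\le\Lambda$. Define $L_Ku(x):=\mathrm{PV}\int_{\mathbb{R}}(u(y)-u(x))K(x-y)\,dy$. Let $\bar C,\kappa\in(0,+\infty)$ and $\sigma,\tau\in(1,+\infty)$. Let $\phi\in C^{1,1}(\mathbb{R})$ with $\phi(x)\ge\bar C|x|^{-\sigma}$ for $x<-\kappa$ and $\phi(x)\ge\bar C|x|^{-\tau}$ for $x>\kappa$, and $\phi(x)\ge\gamma$ for all $x\in[-\kappa,\kappa]$, for some $\gamma\in(0,+\infty)$. Suppose also that $\lim_{x\to\pm\infty}|x|\phi(x)=0$ and $$\lim_{x\to+\infty}x^3\|\phi''\|_{L^\infty(\frac x2,\frac{3x}2)}=0\quad\text{and}\quad\lim_{x\to-\infty}x^3\|\phi''\|_{L^\infty(\frac{3x}2,\frac x2)}=0.$$ Then $$\liminf_{|x|\to+\infty}|x|^{1+2s}L_K\phi(x)\ge\lambda\left(\frac{\bar C\kappa^{1-\sigma}}{\sigma-1}+\int_{-\kappa}^{\kappa}\phi(y)\,dy+\frac{\bar C\kappa^{1-\tau}}{\tau-1}\right).$$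
   Context: PV denotes the Cauchy principal value. $C^{1,1}(\mathbb{R})$ denotes bounded functions with bounded derivative whose derivative is globally Lipschitz. *)

theory Defs
  imports "HOL-Analysis.Analysis" "HOL-Probability.Essential_Supremum"
begin

definition C11 :: "(real \<Rightarrow> real) \<Rightarrow> bool" where
  "C11 u \<longleftrightarrow> bounded (range u) \<and> (\<forall>x. u differentiable (at x))
     \<and> bounded (range (deriv u))
     \<and> (\<exists>L. \<forall>x y. \<bar>deriv u x - deriv u y\<bar> \<le> L * \<bar>x - y\<bar>)"

definition LK :: "(real \<Rightarrow> ennreal) \<Rightarrow> (real \<Rightarrow> real) \<Rightarrow> real \<Rightarrow> real" where
  "LK K u x = Lim (at_right 0)
     (\<lambda>\<epsilon>. LINT y:{y. \<epsilon> < \<bar>y - x\<bar>}|lborel. (u y - u x) * enn2real (K (x - y)))"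

definition weak_second_deriv :: "(real \<Rightarrow> real) \<Rightarrow> (real \<Rightarrow> real) \<Rightarrow> bool" where
  "weak_second_deriv u \<psi> \<longleftrightarrow> \<psi> \<in> borel_measurable lborel \<and>
     (\<forall>a b. a \<le> b \<longrightarrow> (\<psi> has_integral (deriv u b - deriv u a)) {a..b})"

definition Linf_on :: "(real \<Rightarrow> real) \<Rightarrow> real set \<Rightarrow> ereal" where
  "Linf_on \<psi> A = esssup (restrict_space lborel A) (\<lambda>y. ereal \<bar>\<psi> y\<bar>)"

end

theory Submission
  imports Defs
begin

text \<open>
  Fix R and let |x| be large. Split the principal value integral defining L_K phi(x) at the
  radius r = |x|/2. On the near part, expanding phi to second order around x, the first-order
  term integrates to zero against the even kernel, and the remainder is bounded by
  sup |phi''| on the ball B(x, r) times r^(2-2s), which is o(|x|^(-1-2s)) by the decay assumed on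
  phi''. On the far part, phi(x) times the kernel mass of {|h| >= r} is O(phi(x) |x|^(-2s)),
  which is o(|x|^(-1-2s)) because |x| phi(x) tends to 0; and since phi >= 0 the remaining
  integral of phi(x - h) K(h) is at least lam (|x| + R)^(-1-2s) times the integral of phi
  over [-R, R]. Hence the liminf is at least lam times the integral of phi over [-R, R] for
  every R; bounding this integral below by the power tails of phi and letting R tend to
  infinity gives the claim.
\<close>

lemma has_bochner_integral_if_has_integral_nonneg:
  fixes f :: "real \<Rightarrow> real"
  assumes "(f has_integral I) S" and "\<And>x. x \<in> S \<Longrightarrow> 0 \<le> f x"
    and "S \<in> sets borel" and "f \<in> borel_measurable borel"
  shows "has_bochner_integral lborel (\<lambda>x. indicator S x * f x) I"
proof (rule has_bochner_integral_nn_integral)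
  show "(\<lambda>x. indicator S x * f x) \<in> borel_measurable lborel"
    using assms(3,4) by measurable
  show "0 \<le> I"
    using has_integral_nonneg assms(1,2) by blast
  show "(\<integral>\<^sup>+x. ennreal (indicator S x * f x) \<partial>lborel) = ennreal I"
    using nn_integral_has_integral_lebesgue assms(1,2) by blast
qed (use assms(2) in \<open>auto simp: indicator_def\<close>)

lemma has_bochner_integral_abs_powr_tail:
  fixes r a :: real
  assumes "0 < r" "1 < a"
  shows "has_bochner_integral lborel (\<lambda>h. indicator {h. r \<le> \<bar>h\<bar>} h * \<bar>h\<bar> powr - a)
           (2 * (r powr (1 - a) / (a - 1)))"
proof -
  have "((\<lambda>h. h powr - a) has_integral r powr (1 - a) / (a - 1)) {r..}"
    using has_integral_powr_to_inf[of "- a" r] assms by (simp add: minus_divide_right)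
  then have "has_bochner_integral lborel (\<lambda>h. indicator {r..} h * h powr - a) (r powr (1 - a) / (a - 1))"
    by (rule has_bochner_integral_if_has_integral_nonneg) auto
  then have "has_bochner_integral lborel
      (\<lambda>h. indicator {0..} h *\<^sub>R (indicator {h. r \<le> \<bar>h\<bar>} h * \<bar>h\<bar> powr - a))
      (r powr (1 - a) / (a - 1))"
    by (rule has_bochner_integral_cong[THEN iffD1, rotated -1])
       (use assms in \<open>auto simp: indicator_def\<close>)
  moreover have "indicator {h. r \<le> \<bar>h\<bar>} (- h) * \<bar>- h\<bar> powr - a
      = indicator {h. r \<le> \<bar>h\<bar>} h * \<bar>h\<bar> powr - a" for h :: real
    by (simp add: indicator_def)
  ultimately have "has_bochner_integral lborel (\<lambda>h. indicator {h. r \<le> \<bar>h\<bar>} h * \<bar>h\<bar> powr - a)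
      (2 *\<^sub>R (r powr (1 - a) / (a - 1)))"
    by (rule has_bochner_integral_even_function)
  then show ?thesis by simp
qed

lemma has_bochner_integral_abs_powr_ball:
  fixes r b :: real
  assumes "0 \<le> r" "-1 < b"
  shows "has_bochner_integral lborel (\<lambda>h. indicator {-r..r} h * \<bar>h\<bar> powr b)
           (2 * (r powr (b + 1) / (b + 1)))"
proof -
  have "((\<lambda>h. h powr b) has_integral r powr (b + 1) / (b + 1)) {0..r}"
    using has_integral_powr_from_0 assms by blast
  then have "has_bochner_integral lborel (\<lambda>h. indicator {0..r} h * h powr b) (r powr (b + 1) / (b + 1))"
    by (rule has_bochner_integral_if_has_integral_nonneg) auto
  then have "has_bochner_integral lborel
      (\<lambda>h. indicator {0..} h *\<^sub>R (indicator {-r..r} h * \<bar>h\<bar> powr b)) (r powr (b + 1) / (b + 1))"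
    by (rule has_bochner_integral_cong[THEN iffD1, rotated -1])
       (use assms in \<open>auto simp: indicator_def\<close>)
  moreover have "indicator {-r..r} (- h) * \<bar>- h\<bar> powr b = indicator {-r..r} h * \<bar>h\<bar> powr b"
    for h :: real
    by (auto simp: indicator_def)
  ultimately have "has_bochner_integral lborel (\<lambda>h. indicator {-r..r} h * \<bar>h\<bar> powr b)
      (2 *\<^sub>R (r powr (b + 1) / (b + 1)))"
    by (rule has_bochner_integral_even_function)
  then show ?thesis by simp
qed

lemma deriv_lipschitz_if_weak_second_deriv_bounded:
  assumes \<psi>: "weak_second_deriv f \<psi>"
    and M: "AE y in lborel. y \<in> {c<..<d} \<longrightarrow> \<bar>\<psi> y\<bar> \<le> M" and "0 \<le> M"
    and uv: "u \<in> {c<..<d}" "v \<in> {c<..<d}"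
  shows "\<bar>deriv f v - deriv f u\<bar> \<le> M * \<bar>v - u\<bar>"
proof -
  have main: "\<bar>deriv f q - deriv f p\<bar> \<le> M * (q - p)"
    if "p \<in> {c<..<d}" "q \<in> {c<..<d}" "p \<le> q" for p q
  proof -
    have [measurable]: "\<psi> \<in> borel_measurable borel"
      using \<psi> by (simp add: weak_second_deriv_def)
    define N where "N = {y \<in> {c<..<d}. M < \<bar>\<psi> y\<bar>}"
    have "N \<in> sets borel"
      unfolding N_def by measurable
    moreover have "AE y in lborel. y \<notin> N"
      using M unfolding N_def by eventually_elim auto
    ultimately have "N \<in> null_sets lborel"
      by (simp add: AE_iff_null_sets)
    then have "negligible N"
      by (simp add: negligible_iff_null_sets null_sets_completionI)
    moreover have "(\<psi> has_integral (deriv f q - deriv f p)) {p..q}"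
      using \<psi> that by (simp add: weak_second_deriv_def)
    ultimately have "((\<lambda>y. if \<bar>\<psi> y\<bar> \<le> M then \<psi> y else 0)
        has_integral (deriv f q - deriv f p)) {p..q}"
      by (elim has_integral_spike) (use that in \<open>auto simp: N_def\<close>)
    then have "norm (deriv f q - deriv f p) \<le> M * (q - p)"
      by (rule has_integral_bound_real[OF \<open>0 \<le> M\<close> finite.emptyI, THEN order_trans])
         (use that assms(3) in auto)
    then show ?thesis
      by simp
  qed
  show ?thesis
    using main[OF uv] main[OF uv(2,1)] by (cases "u \<le> v") (auto simp: abs_minus_commute)
qed

lemma taylor_first_order_remainder_bound:
  fixes f f' :: "real \<Rightarrow> real"
  assumes f': "\<And>y. y \<in> ball x r \<Longrightarrow> (f has_real_derivative f' y) (at y)"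
    and lip: "\<And>u v. u \<in> ball x r \<Longrightarrow> v \<in> ball x r \<Longrightarrow> \<bar>f' v - f' u\<bar> \<le> M * \<bar>v - u\<bar>"
    and "0 \<le> M" and h: "\<bar>h\<bar> < r"
  shows "\<bar>f (x - h) - f x + f' x * h\<bar> \<le> M * h\<^sup>2"
proof -
  define g where "g t = f (x - t) + f' x * t" for t
  have in_ball: "x - t \<in> ball x r" if "t \<in> cball 0 \<bar>h\<bar>" for t
    using that h by (simp add: dist_real_def)
  have "(g has_field_derivative f' x - f' (x - t)) (at t within cball 0 \<bar>h\<bar>)"
    if "t \<in> cball 0 \<bar>h\<bar>" for t
  proof -
    have "((\<lambda>t. f (x - t)) has_field_derivative f' (x - t) * - 1) (at t within cball 0 \<bar>h\<bar>)"
      by (rule DERIV_chain'[where f="\<lambda>t. x - t", OF _ f'[OF in_ball[OF that]]])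
         (auto intro!: derivative_eq_intros)
    then show ?thesis
      unfolding g_def by (auto intro!: derivative_eq_intros)
  qed
  moreover have "norm (f' x - f' (x - t)) \<le> M * \<bar>h\<bar>" if "t \<in> cball 0 \<bar>h\<bar>" for t
  proof -
    have "\<bar>f' x - f' (x - t)\<bar> \<le> M * \<bar>t\<bar>"
      using lip[OF in_ball[OF that], of x] h by simp
    also have "\<dots> \<le> M * \<bar>h\<bar>"
      using that \<open>0 \<le> M\<close> by (intro mult_left_mono) auto
    finally show ?thesis by simp
  qed
  ultimately have "norm (g h - g 0) \<le> M * \<bar>h\<bar> * norm (h - 0)"
    by (intro field_differentiable_bound[of "cball 0 \<bar>h\<bar>"]) auto
  then show ?thesis
    by (simp add: g_def power2_eq_square abs_mult)
qed

lemma AE_le_Linf_on: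
  assumes "A \<in> sets borel"
  shows "AE y in lborel. y \<in> A \<longrightarrow> ereal \<bar>\<psi> y\<bar> \<le> Linf_on \<psi> A"
proof -
  have "AE y in restrict_space lborel A. ereal \<bar>\<psi> y\<bar> \<le> Linf_on \<psi> A"
    unfolding Linf_on_def by (rule esssup_AE)
  then show ?thesis
    using assms by (simp add: AE_restrict_space_iff)
qed

lemma tendsto_integral_abs_gt_at_right_0:
  fixes f :: "real \<Rightarrow> real"
  assumes f: "integrable lborel f"
  shows "((\<lambda>\<epsilon>. \<integral>h. indicator {h. \<epsilon> < \<bar>h\<bar>} h * f h \<partial>lborel) \<longlongrightarrow> integral\<^sup>L lborel f) (at_right 0)"
  unfolding filterlim_at_right_to_top
proof (rule integral_dominated_convergence_at_top[OF _ _ integrable_norm[OF f]])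
  show "AE h in lborel. ((\<lambda>t. indicator {h. inverse t < \<bar>h\<bar>} h * f h) \<longlongrightarrow> f h) at_top"
    using AE_lborel_singleton[of 0]
  proof eventually_elim
    case (elim h)
    have "\<forall>\<^sub>F t in at_top. indicator {h. inverse t < \<bar>h\<bar>} h * f h = f h"
      using eventually_gt_at_top[of "inverse \<bar>h\<bar>"]
      by eventually_elim (use elim less_imp_inverse_less[of "inverse \<bar>h\<bar>"] in \<open>auto simp: indicator_def\<close>)
    then show ?case
      by (rule tendsto_eventually)
  qed
qed (use f in \<open>auto simp: indicator_def\<close>)

lemma ereal_cube_tendsto_0_imp_real:
  fixes L :: "real \<Rightarrow> ereal"
  assumes lim: "((\<lambda>x. ereal (x ^ 3) * L x) \<longlongrightarrow> 0) F" and nonzero: "\<forall>\<^sub>F x in F. x \<noteq> 0"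
  shows "((\<lambda>x. \<bar>x\<bar> ^ 3 * max 0 (real_of_ereal (L x))) \<longlongrightarrow> 0) F"
    and "\<forall>\<^sub>F x in F. \<bar>L x\<bar> \<noteq> \<infinity>"
proof -
  have "\<forall>\<^sub>F x in F. ereal (x ^ 3) * L x \<in> {-1<..<1}"
    using lim by (rule topological_tendstoD) auto
  with nonzero show finite: "\<forall>\<^sub>F x in F. \<bar>L x\<bar> \<noteq> \<infinity>"
  proof eventually_elim
    case (elim x)
    then show ?case
      by (cases "L x") (auto simp: ereal_mult_infty split: if_splits)
  qed
  have "\<forall>\<^sub>F x in F. ereal (x ^ 3) * L x = ereal (x ^ 3 * real_of_ereal (L x))"
    using finite by eventually_elim (metis ereal_real times_ereal.simps(1))
  then have "((\<lambda>x. ereal (x ^ 3 * real_of_ereal (L x))) \<longlongrightarrow> ereal 0) F"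
    using lim by (simp add: zero_ereal_def tendsto_cong)
  then have abs_lim: "((\<lambda>x. \<bar>x ^ 3 * real_of_ereal (L x)\<bar>) \<longlongrightarrow> 0) F"
    by (intro tendsto_rabs_zero) (simp only: lim_ereal)
  have le: "\<bar>x\<bar> ^ 3 * max 0 r \<le> \<bar>x ^ 3 * r\<bar>" for x r :: real
    by (simp add: abs_mult power_abs mult_left_mono)
  show "((\<lambda>x. \<bar>x\<bar> ^ 3 * max 0 (real_of_ereal (L x))) \<longlongrightarrow> 0) F"
    by (rule tendsto_sandwich[OF always_eventually always_eventually tendsto_const abs_lim])
       (use le in auto)
qed

lemma has_integral_powr_segment:
  fixes a b t :: real
  assumes "0 < a" "a \<le> b" "1 < t"
  shows "((\<lambda>y. y powr - t) has_integral (a powr (1 - t) - b powr (1 - t)) / (t - 1)) {a..b}"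
proof -
  have "((\<lambda>y. y powr - t) has_integral (b powr (1 - t) / (1 - t) - a powr (1 - t) / (1 - t))) {a..b}"
    using assms
    by (intro fundamental_theorem_of_calculus)
       (auto intro!: derivative_eq_intros
             simp flip: has_real_derivative_iff_has_vector_derivative simp: divide_simps)
  then show ?thesis
    by (simp add: diff_divide_distrib[symmetric]) (metis minus_diff_eq minus_divide_divide)
qed

lemma integral_ge_powr_segment:
  fixes u :: "real \<Rightarrow> real"
  assumes "u integrable_on {a..b}" "0 < a" "a \<le> b" "1 < t"
    and "\<And>y. a < y \<Longrightarrow> C * y powr - t \<le> u y"
  shows "C * ((a powr (1 - t) - b powr (1 - t)) / (t - 1)) \<le> integral {a..b} u"
proof (rule has_integral_le)
  \<comment> \<open>The comparison function is redefined at the endpoint a, where no bound on u is assumed.\<close>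
  have "((\<lambda>y. C * y powr - t) has_integral C * ((a powr (1 - t) - b powr (1 - t)) / (t - 1))) {a..b}"
    using has_integral_powr_segment[OF assms(2-4)] by (rule has_integral_mult_right)
  then show "((\<lambda>y. if y = a then u a else C * y powr - t)
      has_integral C * ((a powr (1 - t) - b powr (1 - t)) / (t - 1))) {a..b}"
    by (rule has_integral_spike_finite[where S="{a}", rotated 2]) auto
qed (use assms in \<open>auto intro: integrable_integral\<close>)

lemma integral_ge_powr_tails:
  fixes u :: "real \<Rightarrow> real"
  assumes "continuous_on UNIV u" "0 < \<kappa>" "\<kappa> \<le> R" "1 < \<sigma>" "1 < \<tau>"
    and "\<And>y. y < - \<kappa> \<Longrightarrow> C * \<bar>y\<bar> powr - \<sigma> \<le> u y"
    and "\<And>y. \<kappa> < y \<Longrightarrow> C * \<bar>y\<bar> powr - \<tau> \<le> u y"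
  shows "C * ((\<kappa> powr (1 - \<sigma>) - R powr (1 - \<sigma>)) / (\<sigma> - 1)) + integral {-\<kappa>..\<kappa>} u
           + C * ((\<kappa> powr (1 - \<tau>) - R powr (1 - \<tau>)) / (\<tau> - 1)) \<le> integral {-R..R} u"
proof -
  have integrable: "f integrable_on {a..b}" if "continuous_on UNIV f" for f :: "real \<Rightarrow> real" and a b
    using that by (intro integrable_continuous_interval) (auto intro: continuous_on_subset)
  have "continuous_on UNIV (\<lambda>y. u (- y))"
    by (intro continuous_on_compose2[OF assms(1)] continuous_intros) auto
  moreover have "C * y powr - \<sigma> \<le> u (- y)" if "\<kappa> < y" for y
  proof -
    have "0 < y"
      using that assms(2) by linarith
    with assms(6)[of "- y"] that show ?thesis
      by simp
  qed
  ultimately have "C * ((\<kappa> powr (1 - \<sigma>) - R powr (1 - \<sigma>)) / (\<sigma> - 1))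
      \<le> integral {\<kappa>..R} (\<lambda>y. u (- y))"
    using assms by (intro integral_ge_powr_segment integrable) auto
  moreover have "C * ((\<kappa> powr (1 - \<tau>) - R powr (1 - \<tau>)) / (\<tau> - 1)) \<le> integral {\<kappa>..R} u"
    using assms by (intro integral_ge_powr_segment integrable) auto
  moreover have "integral {-R..-\<kappa>} u + integral {-\<kappa>..\<kappa>} u + integral {\<kappa>..R} u = integral {-R..R} u"
    using assms by (simp add: integrable Henstock_Kurzweil_Integration.integral_combine)
  ultimately show ?thesis
    using Henstock_Kurzweil_Integration.integral_reflect_real[of "- \<kappa>" "- R" u] by simp
qed

lemma ereal_le_if_truncated_integrals_le:
  fixes u :: "real \<Rightarrow> real" and X :: ereal
  assumes "continuous_on UNIV u" "0 < \<kappa>" "1 < \<sigma>" "1 < \<tau>" "0 \<le> c"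
    and "\<And>y. y < - \<kappa> \<Longrightarrow> C * \<bar>y\<bar> powr - \<sigma> \<le> u y"
    and "\<And>y. \<kappa> < y \<Longrightarrow> C * \<bar>y\<bar> powr - \<tau> \<le> u y"
    and le: "\<And>R. \<kappa> \<le> R \<Longrightarrow> ereal (c * integral {-R..R} u) \<le> X"
  shows "ereal (c * (C * \<kappa> powr (1 - \<sigma>) / (\<sigma> - 1) + integral {-\<kappa>..\<kappa>} u
           + C * \<kappa> powr (1 - \<tau>) / (\<tau> - 1))) \<le> X"
proof -
  define lower where "lower R = c * (C * ((\<kappa> powr (1 - \<sigma>) - R powr (1 - \<sigma>)) / (\<sigma> - 1))
      + integral {-\<kappa>..\<kappa>} u + C * ((\<kappa> powr (1 - \<tau>) - R powr (1 - \<tau>)) / (\<tau> - 1)))" for R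
  have lim: "((\<lambda>R. ereal (lower R)) \<longlongrightarrow> ereal (c * (C * ((\<kappa> powr (1 - \<sigma>) - 0) / (\<sigma> - 1))
      + integral {-\<kappa>..\<kappa>} u + C * ((\<kappa> powr (1 - \<tau>) - 0) / (\<tau> - 1))))) at_top"
    unfolding lower_def using assms by (intro tendsto_intros tendsto_neg_powr filterlim_ident) auto
  have "\<forall>\<^sub>F R in at_top. ereal (lower R) \<le> X"
    using eventually_ge_at_top[of \<kappa>]
  proof eventually_elim
    case (elim R)
    have "lower R \<le> c * integral {-R..R} u"
      unfolding lower_def using assms elim by (intro mult_left_mono integral_ge_powr_tails) auto
    then show ?case
      using le[OF elim] by (metis ereal_less_eq(3) order_trans)
  qed
  from tendsto_le[OF trivial_limit_at_top_linorder tendsto_const lim this] show ?thesis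
    by simp
qed

lemma has_bochner_integral_reflected_interval:
  fixes u :: "real \<Rightarrow> real"
  assumes "continuous_on {a..b} u"
  shows "has_bochner_integral lborel (\<lambda>h. indicator {a..b} (x - h) * u (x - h)) (integral {a..b} u)"
proof -
  have "integrable lborel (\<lambda>y. indicator {a..b} y *\<^sub>R u y)"
    using assms by (intro borel_integrable_compact) auto
  moreover from this have "(\<integral>y. indicator {a..b} y * u y \<partial>lborel) = integral {a..b} u"
    using set_borel_integral_eq_integral(2)[of "{a..b}" u]
    by (simp add: set_integrable_def set_lebesgue_integral_def)
  ultimately have "has_bochner_integral lborel (\<lambda>y. indicator {a..b} y * u y) (integral {a..b} u)"
    by (simp add: has_bochner_integral_iff)
  then show ?thesis
    by (subst (asm) lborel_has_bochner_integral_real_affine_iff[where c="-1" and t=x]) simp_all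
qed

lemma powr_mult_half_powr:
  fixes t a b :: real
  assumes "0 < t"
  shows "t powr a * (t / 2) powr b = t powr (a + b) * 2 powr - b"
  using assms by (simp add: powr_divide powr_add powr_minus_divide)

locale stable_kernel =
  fixes s lam Lam :: real and K :: "real \<Rightarrow> ennreal"
  assumes s: "0 < s" "s < 1"
    and K_measurable [measurable]: "K \<in> borel_measurable borel"
    and K_even: "AE h in lborel. K h = K (- h)"
    and lam_Lam: "0 < lam" "lam \<le> Lam"
    and K_bounds: "AE h in lborel. ennreal (lam * \<bar>h\<bar> powr - (1 + 2 * s)) \<le> K h
                                  \<and> K h \<le> ennreal (Lam * \<bar>h\<bar> powr - (1 + 2 * s))"
begin

definition k :: "real \<Rightarrow> real" where
  "k h = enn2real (K h)"

lemma k_measurable [measurable]: "k \<in> borel_measurable borel"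
  unfolding k_def by measurable

lemma k_nonneg: "0 \<le> k h"
  by (simp add: k_def)

lemma AE_k_bounds:
  "AE h in lborel. lam * \<bar>h\<bar> powr - (1 + 2 * s) \<le> k h \<and> k h \<le> Lam * \<bar>h\<bar> powr - (1 + 2 * s)"
  using K_bounds
proof eventually_elim
  case (elim h)
  have nonneg: "0 \<le> c * \<bar>h\<bar> powr - (1 + 2 * s)" if "0 \<le> c" for c
    using that by simp
  have "K h < top"
    using elim ennreal_less_top by (rule le_less_trans[OF conjunct2])
  then have "lam * \<bar>h\<bar> powr - (1 + 2 * s) \<le> k h"
    using enn2real_mono[OF conjunct1[OF elim]] nonneg lam_Lam by (simp add: k_def)
  moreover have "k h \<le> Lam * \<bar>h\<bar> powr - (1 + 2 * s)"
    using enn2real_leI[OF nonneg conjunct2[OF elim]] lam_Lam by (simp add: k_def)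
  ultimately show ?case ..
qed

lemma AE_k_even: "AE h in lborel. k (- h) = k h"
  using K_even by eventually_elim (simp add: k_def)

lemma LK_eq_Lim_shifted:
  "LK K u x = Lim (at_right 0) (\<lambda>\<epsilon>. \<integral>h. indicator {h. \<epsilon> < \<bar>h\<bar>} h * ((u (x - h) - u x) * k h) \<partial>lborel)"
proof -
  have "(LINT y:{y. \<epsilon> < \<bar>y - x\<bar>}|lborel. (u y - u x) * enn2real (K (x - y)))
      = (\<integral>h. indicator {h. \<epsilon> < \<bar>h\<bar>} h * ((u (x - h) - u x) * k h) \<partial>lborel)" for \<epsilon>
    unfolding set_lebesgue_integral_def
    by (subst lborel_integral_real_affine[where c="-1" and t=x]) (auto simp: k_def indicator_def)
  then show ?thesis
    unfolding LK_def by (simp only:)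
qed

lemma integrable_kernel_mult_bounded:
  assumes "A \<in> sets borel" "A \<subseteq> {h. \<rho> \<le> \<bar>h\<bar>}" "0 < \<rho>" "f \<in> borel_measurable borel"
    and "\<And>h. h \<in> A \<Longrightarrow> \<bar>f h\<bar> \<le> B"
  shows "integrable lborel (\<lambda>h. indicator A h * (f h * k h))"
proof (rule Bochner_Integration.integrable_bound)
  have "integrable lborel (\<lambda>h. indicator {h. \<rho> \<le> \<bar>h\<bar>} h * \<bar>h\<bar> powr - (1 + 2 * s))"
    by (rule integrable.intros[OF has_bochner_integral_abs_powr_tail]) (use assms(3) s in auto)
  then show "integrable lborel (\<lambda>h. B * Lam * (indicator {h. \<rho> \<le> \<bar>h\<bar>} h * \<bar>h\<bar> powr - (1 + 2 * s)))"
    by (rule integrable_mult_right)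
  show "AE h in lborel. norm (indicator A h * (f h * k h))
      \<le> norm (B * Lam * (indicator {h. \<rho> \<le> \<bar>h\<bar>} h * \<bar>h\<bar> powr - (1 + 2 * s)))"
    using AE_k_bounds
  proof eventually_elim
    case (elim h)
    show ?case
    proof (cases "h \<in> A")
      case True
      then have "\<bar>f h\<bar> * k h \<le> B * (Lam * \<bar>h\<bar> powr - (1 + 2 * s))"
        using elim assms(5)[OF True] k_nonneg[of h] by (intro mult_mono) auto
      moreover have "0 \<le> B" "\<rho> \<le> \<bar>h\<bar>"
        using assms(2,5) True by force+
      ultimately show ?thesis
        using lam_Lam True by (simp add: abs_mult k_nonneg mult.assoc)
    qed simp
  qed
  show "(\<lambda>h. indicator A h * (f h * k h)) \<in> borel_measurable lborel"
    using assms(1,4) by measurable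
qed

lemma integral_kernel_odd_eq_0:
  assumes "A \<in> sets borel" "\<And>h. - h \<in> A \<longleftrightarrow> h \<in> A"
    and "f \<in> borel_measurable borel" "\<And>h. f (- h) = - f h"
  shows "(\<integral>h. indicator A h * (f h * k h) \<partial>lborel) = 0"
proof -
  let ?g = "\<lambda>h. indicator A h * (f h * k h)"
  have "integral\<^sup>L lborel ?g = (\<integral>h. ?g (- h) \<partial>lborel)"
    using lborel_integral_real_affine[of "-1" ?g 0] by simp
  also have "\<dots> = (\<integral>h. - ?g h \<partial>lborel)"
    using AE_k_even by (intro integral_cong_AE) (use assms in \<open>auto simp: indicator_def\<close>)
  finally show ?thesis
    by simp
qed

lemma integral_kernel_tail_le:
  assumes "0 < r"
  shows "(\<integral>h. indicator {h. r \<le> \<bar>h\<bar>} h * k h \<partial>lborel) \<le> Lam * r powr (- 2 * s) / s"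
proof -
  have tail: "has_bochner_integral lborel (\<lambda>h. indicator {h. r \<le> \<bar>h\<bar>} h * \<bar>h\<bar> powr - (1 + 2 * s))
      (r powr (- 2 * s) / s)"
    using has_bochner_integral_abs_powr_tail[of r "1 + 2 * s"] assms s by simp
  have "(\<integral>h. indicator {h. r \<le> \<bar>h\<bar>} h * k h \<partial>lborel)
      \<le> (\<integral>h. Lam * (indicator {h. r \<le> \<bar>h\<bar>} h * \<bar>h\<bar> powr - (1 + 2 * s)) \<partial>lborel)"
  proof (rule integral_mono_AE)
    show "integrable lborel (\<lambda>h. indicator {h. r \<le> \<bar>h\<bar>} h * k h)"
      using integrable_kernel_mult_bounded[of _ r "\<lambda>_. 1" 1] assms by simp
    show "AE h in lborel. indicator {h. r \<le> \<bar>h\<bar>} h * k h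
        \<le> Lam * (indicator {h. r \<le> \<bar>h\<bar>} h * \<bar>h\<bar> powr - (1 + 2 * s))"
      using AE_k_bounds by eventually_elim (auto simp: indicator_def)
  qed (use integrable.intros[OF tail] in simp)
  also have "\<dots> = Lam * r powr (- 2 * s) / s"
    using tail by (simp add: has_bochner_integral_integral_eq)
  finally show ?thesis .
qed

lemma taylor_remainder_kernel_integral:
  fixes u :: "real \<Rightarrow> real"
  assumes [measurable]: "u \<in> borel_measurable borel" and "0 < r" and "0 \<le> M"
    and taylor: "\<And>h. \<bar>h\<bar> < r \<Longrightarrow> \<bar>u (x - h) - u x + D * h\<bar> \<le> M * h\<^sup>2"
  defines "Q \<equiv> \<lambda>h. indicator {h. \<bar>h\<bar> < r} h * ((u (x - h) - u x + D * h) * k h)"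
  shows "integrable lborel Q" and "\<bar>integral\<^sup>L lborel Q\<bar> \<le> M * Lam * r powr (2 - 2 * s) / (1 - s)"
proof -
  define w where "w h = M * Lam * (indicator {-r..r} h * \<bar>h\<bar> powr (1 - 2 * s))" for h
  have w: "has_bochner_integral lborel w (M * Lam * r powr (2 - 2 * s) / (1 - s))"
  proof -
    have "has_bochner_integral lborel w (M * Lam * (2 * (r powr (1 - 2 * s + 1) / (1 - 2 * s + 1))))"
      unfolding w_def using has_bochner_integral_abs_powr_ball[of r "1 - 2 * s"] \<open>0 < r\<close> s
      by (intro has_bochner_integral_mult_right) auto
    moreover have "M * Lam * (2 * (r powr (1 - 2 * s + 1) / (1 - 2 * s + 1)))
        = M * Lam * r powr (2 - 2 * s) / (1 - s)"
      using s by (simp add: field_simps)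
    ultimately show ?thesis
      by metis
  qed
  have bound: "AE h in lborel. norm (Q h) \<le> w h"
    using AE_k_bounds
  proof eventually_elim
    case (elim h)
    show ?case
    proof (cases "\<bar>h\<bar> < r \<and> h \<noteq> 0")
      case True
      have "h\<^sup>2 * \<bar>h\<bar> powr - (1 + 2 * s) = \<bar>h\<bar> powr 2 * \<bar>h\<bar> powr - (1 + 2 * s)"
        using True by (simp add: powr_numeral)
      also have "\<dots> = \<bar>h\<bar> powr (1 - 2 * s)"
        by (simp only: powr_add[symmetric]) (rule arg_cong[where f="\<lambda>e. \<bar>h\<bar> powr e"], simp)
      finally have power: "h\<^sup>2 * \<bar>h\<bar> powr - (1 + 2 * s) = \<bar>h\<bar> powr (1 - 2 * s)" .
      have "norm (Q h) = \<bar>u (x - h) - u x + D * h\<bar> * k h"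
        using True by (simp add: Q_def abs_mult k_nonneg)
      also have "\<dots> \<le> M * h\<^sup>2 * (Lam * \<bar>h\<bar> powr - (1 + 2 * s))"
        using True elim taylor[of h] \<open>0 \<le> M\<close> by (intro mult_mono) (auto simp: k_nonneg)
      also have "\<dots> = M * Lam * (h\<^sup>2 * \<bar>h\<bar> powr - (1 + 2 * s))"
        by (simp add: ac_simps)
      also have "\<dots> = w h"
        unfolding power w_def using True by (auto simp: indicator_def)
      finally show ?thesis .
    next
      case False
      then show ?thesis
        using \<open>0 \<le> M\<close> lam_Lam by (auto simp: Q_def w_def indicator_def)
    qed
  qed
  show Q: "integrable lborel Q"
  proof (rule Bochner_Integration.integrable_bound[OF integrable.intros[OF w]])
    show "Q \<in> borel_measurable lborel"
      unfolding Q_def by measurable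
    show "AE h in lborel. norm (Q h) \<le> norm (w h)"
      using bound by eventually_elim (simp add: order_trans[OF _ abs_ge_self])
  qed
  have "\<bar>integral\<^sup>L lborel Q\<bar> \<le> (\<integral>h. norm (Q h) \<partial>lborel)"
    using integral_norm_bound[of lborel Q] by simp
  also have "\<dots> \<le> integral\<^sup>L lborel w"
    using Q integrable.intros[OF w] bound by (intro integral_mono_AE) auto
  finally show "\<bar>integral\<^sup>L lborel Q\<bar> \<le> M * Lam * r powr (2 - 2 * s) / (1 - s)"
    using w by (simp add: has_bochner_integral_integral_eq)
qed

lemma LK_ge_far_minus_remainder:
  fixes u :: "real \<Rightarrow> real"
  assumes u [measurable]: "u \<in> borel_measurable borel" and bounded: "\<And>y. \<bar>u y\<bar> \<le> B"
    and "0 < r" "0 \<le> M"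
    and taylor: "\<And>h. \<bar>h\<bar> < r \<Longrightarrow> \<bar>u (x - h) - u x + D * h\<bar> \<le> M * h\<^sup>2"
  shows "(\<integral>h. indicator {h. r \<le> \<bar>h\<bar>} h * ((u (x - h) - u x) * k h) \<partial>lborel)
           - M * Lam * r powr (2 - 2 * s) / (1 - s) \<le> LK K u x"
proof -
  define G where "G h = (u (x - h) - u x) * k h" for h
  define Q where "Q h = indicator {h. \<bar>h\<bar> < r} h * ((u (x - h) - u x + D * h) * k h)" for h
  define far where "far = (\<integral>h. indicator {h. r \<le> \<bar>h\<bar>} h * G h \<partial>lborel)"
  have "\<bar>u (x - h) - u x\<bar> \<le> 2 * B" for h
    using bounded[of x] bounded[of "x - h"] by linarith
  then have far_integrable: "integrable lborel (\<lambda>h. indicator {h. r \<le> \<bar>h\<bar>} h * G h)"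
    unfolding G_def using \<open>0 < r\<close> by (intro integrable_kernel_mult_bounded) auto
  have Q: "integrable lborel Q" "\<bar>integral\<^sup>L lborel Q\<bar> \<le> M * Lam * r powr (2 - 2 * s) / (1 - s)"
    using taylor_remainder_kernel_integral[OF u \<open>0 < r\<close> \<open>0 \<le> M\<close> taylor] unfolding Q_def by blast+
  \<comment> \<open>The first-order term is odd on each annulus, so it drops out: this is why the
      principal value exists.\<close>
  have split: "(\<integral>h. indicator {h. \<epsilon> < \<bar>h\<bar>} h * G h \<partial>lborel)
      = far + (\<integral>h. indicator {h. \<epsilon> < \<bar>h\<bar>} h * Q h \<partial>lborel)" if "0 < \<epsilon>" "\<epsilon> < r" for \<epsilon>
  proof -
    let ?odd = "\<lambda>h. indicator {h. \<epsilon> < \<bar>h\<bar> \<and> \<bar>h\<bar> < r} h * (h * k h)"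
    have "(\<lambda>h. indicator {h. \<epsilon> < \<bar>h\<bar>} h * G h) = (\<lambda>h. indicator {h. r \<le> \<bar>h\<bar>} h * G h
        + (indicator {h. \<epsilon> < \<bar>h\<bar>} h * Q h - D * ?odd h))"
      using that by (auto simp: fun_eq_iff indicator_def G_def Q_def algebra_simps)
    moreover have "integrable lborel ?odd"
      using that by (intro integrable_kernel_mult_bounded[where \<rho>=\<epsilon> and B=r]) auto
    moreover have "integral\<^sup>L lborel ?odd = 0"
      by (rule integral_kernel_odd_eq_0) auto
    moreover have "integrable lborel (\<lambda>h. indicator {h. \<epsilon> < \<bar>h\<bar>} h * Q h)"
      using integrable_real_mult_indicator[OF _ Q(1)] by (simp add: mult.commute)
    ultimately show ?thesis
      using far_integrable by (simp add: far_def)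
  qed
  have "((\<lambda>\<epsilon>. \<integral>h. indicator {h. \<epsilon> < \<bar>h\<bar>} h * G h \<partial>lborel)
      \<longlongrightarrow> far + integral\<^sup>L lborel Q) (at_right 0)"
  proof (rule Lim_transform_eventually)
    show "((\<lambda>\<epsilon>. far + (\<integral>h. indicator {h. \<epsilon> < \<bar>h\<bar>} h * Q h \<partial>lborel))
        \<longlongrightarrow> far + integral\<^sup>L lborel Q) (at_right 0)"
      by (intro tendsto_add tendsto_const tendsto_integral_abs_gt_at_right_0 Q)
    show "\<forall>\<^sub>F \<epsilon> in at_right 0. far + (\<integral>h. indicator {h. \<epsilon> < \<bar>h\<bar>} h * Q h \<partial>lborel)
        = (\<integral>h. indicator {h. \<epsilon> < \<bar>h\<bar>} h * G h \<partial>lborel)"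
      using eventually_at_right_real[OF \<open>0 < r\<close>] by eventually_elim (simp add: split)
  qed
  then have "LK K u x = far + integral\<^sup>L lborel Q"
    unfolding LK_eq_Lim_shifted G_def by (intro tendsto_Lim) auto
  with Q(2) show ?thesis
    unfolding far_def G_def by linarith
qed

lemma integral_far_kernel_ge:
  fixes u :: "real \<Rightarrow> real"
  assumes cont: "continuous_on UNIV u" and nonneg: "\<And>y. 0 \<le> u y" and bounded: "\<And>y. u y \<le> B"
    and "0 < R" and x: "2 * R \<le> \<bar>x\<bar>"
  shows "lam * (\<bar>x\<bar> + R) powr - (1 + 2 * s) * integral {-R..R} u
           \<le> (\<integral>h. indicator {h. \<bar>x\<bar> / 2 \<le> \<bar>h\<bar>} h * (u (x - h) * k h) \<partial>lborel)"
proof -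
  have near: "has_bochner_integral lborel (\<lambda>h. indicator {-R..R} (x - h) * u (x - h)) (integral {-R..R} u)"
    using cont by (intro has_bochner_integral_reflected_interval) (auto intro: continuous_on_subset)
  have "lam * (\<bar>x\<bar> + R) powr - (1 + 2 * s) * integral {-R..R} u
      = (\<integral>h. lam * (\<bar>x\<bar> + R) powr - (1 + 2 * s) * (indicator {-R..R} (x - h) * u (x - h)) \<partial>lborel)"
    using near by (simp add: has_bochner_integral_integral_eq)
  also have "\<dots> \<le> (\<integral>h. indicator {h. \<bar>x\<bar> / 2 \<le> \<bar>h\<bar>} h * (u (x - h) * k h) \<partial>lborel)"
  proof (rule integral_mono_AE)
    show "integrable lborel
        (\<lambda>h. lam * (\<bar>x\<bar> + R) powr - (1 + 2 * s) * (indicator {-R..R} (x - h) * u (x - h)))"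
      using integrable.intros[OF near] by (rule integrable_mult_right)
    show "integrable lborel (\<lambda>h. indicator {h. \<bar>x\<bar> / 2 \<le> \<bar>h\<bar>} h * (u (x - h) * k h))"
      using nonneg bounded \<open>0 < R\<close> x borel_measurable_continuous_onI[OF cont]
      by (intro integrable_kernel_mult_bounded[where \<rho>="\<bar>x\<bar> / 2"]) auto
    show "AE h in lborel. lam * (\<bar>x\<bar> + R) powr - (1 + 2 * s) * (indicator {-R..R} (x - h) * u (x - h))
        \<le> indicator {h. \<bar>x\<bar> / 2 \<le> \<bar>h\<bar>} h * (u (x - h) * k h)"
      using AE_k_bounds
    proof eventually_elim
      case (elim h)
      show ?case
      proof (cases "x - h \<in> {-R..R}")
        case True
        then have h: "\<bar>x\<bar> / 2 \<le> \<bar>h\<bar>" "\<bar>h\<bar> \<le> \<bar>x\<bar> + R"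
          using x by auto
        then have "lam * (\<bar>x\<bar> + R) powr - (1 + 2 * s) \<le> lam * \<bar>h\<bar> powr - (1 + 2 * s)"
          using \<open>0 < R\<close> x s lam_Lam by (intro mult_left_mono powr_mono2') auto
        also have "\<dots> \<le> k h"
          using elim by simp
        finally have "lam * (\<bar>x\<bar> + R) powr - (1 + 2 * s) * u (x - h) \<le> k h * u (x - h)"
          using nonneg by (rule mult_right_mono)
        then show ?thesis
          using True h by (simp add: ac_simps)
      qed (simp add: k_nonneg nonneg)
    qed
  qed
  finally show ?thesis .
qed

lemma LK_lower_bound:
  fixes u \<psi> :: "real \<Rightarrow> real"
  assumes deriv: "\<And>y. (u has_real_derivative deriv u y) (at y)"
    and nonneg: "\<And>y. 0 \<le> u y" and bounded: "\<And>y. u y \<le> B"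
    and \<psi>: "weak_second_deriv u \<psi>"
    and \<psi>_bound: "AE y in lborel. y \<in> ball x (\<bar>x\<bar> / 2) \<longrightarrow> \<bar>\<psi> y\<bar> \<le> M" and "0 \<le> M"
    and "0 < R" and x: "2 * R \<le> \<bar>x\<bar>"
  shows "lam * (\<bar>x\<bar> + R) powr - (1 + 2 * s) * integral {-R..R} u
           - u x * Lam * (\<bar>x\<bar> / 2) powr (- 2 * s) / s
           - M * Lam * (\<bar>x\<bar> / 2) powr (2 - 2 * s) / (1 - s) \<le> LK K u x"
proof -
  define r where "r = \<bar>x\<bar> / 2"
  have "0 < r"
    using \<open>0 < R\<close> x by (simp add: r_def)
  have cont: "continuous_on UNIV u"
    using deriv by (meson DERIV_continuous continuous_at_imp_continuous_on)
  have [measurable]: "u \<in> borel_measurable borel"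
    using cont by (rule borel_measurable_continuous_onI)
  have abs_bounded: "\<bar>u y\<bar> \<le> B" for y
    using nonneg[of y] bounded[of y] by simp
  have "\<bar>u (x - h) - u x + deriv u x * h\<bar> \<le> M * h\<^sup>2" if "\<bar>h\<bar> < r" for h
  proof (rule taylor_first_order_remainder_bound[OF deriv _ \<open>0 \<le> M\<close> that])
    show "\<bar>deriv u v - deriv u w\<bar> \<le> M * \<bar>v - w\<bar>" if "w \<in> ball x r" "v \<in> ball x r" for v w
      using that \<psi>_bound unfolding r_def ball_eq_greaterThanLessThan
      by (intro deriv_lipschitz_if_weak_second_deriv_bounded[OF \<psi> _ \<open>0 \<le> M\<close>]) auto
  qed
  then have "(\<integral>h. indicator {h. r \<le> \<bar>h\<bar>} h * ((u (x - h) - u x) * k h) \<partial>lborel)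
      - M * Lam * r powr (2 - 2 * s) / (1 - s) \<le> LK K u x"
    by (intro LK_ge_far_minus_remainder[OF _ abs_bounded \<open>0 < r\<close> \<open>0 \<le> M\<close>]) auto
  moreover have "(\<integral>h. indicator {h. r \<le> \<bar>h\<bar>} h * ((u (x - h) - u x) * k h) \<partial>lborel)
      = (\<integral>h. indicator {h. r \<le> \<bar>h\<bar>} h * (u (x - h) * k h) \<partial>lborel)
        - u x * (\<integral>h. indicator {h. r \<le> \<bar>h\<bar>} h * k h \<partial>lborel)"
  proof -
    have "integrable lborel (\<lambda>h. indicator {h. r \<le> \<bar>h\<bar>} h * (u (x - h) * k h))"
      using abs_bounded \<open>0 < r\<close> by (intro integrable_kernel_mult_bounded) auto
    moreover have "integrable lborel (\<lambda>h. indicator {h. r \<le> \<bar>h\<bar>} h * k h)"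
      using integrable_kernel_mult_bounded[of _ r "\<lambda>_. 1" 1] \<open>0 < r\<close> by simp
    ultimately show ?thesis
      by (simp add: algebra_simps)
  qed
  moreover have "u x * (\<integral>h. indicator {h. r \<le> \<bar>h\<bar>} h * k h \<partial>lborel) \<le> u x * (Lam * r powr (- 2 * s) / s)"
    using integral_kernel_tail_le[OF \<open>0 < r\<close>] nonneg by (rule mult_left_mono)
  moreover have "lam * (\<bar>x\<bar> + R) powr - (1 + 2 * s) * integral {-R..R} u
      \<le> (\<integral>h. indicator {h. r \<le> \<bar>h\<bar>} h * (u (x - h) * k h) \<partial>lborel)"
    unfolding r_def using cont nonneg bounded \<open>0 < R\<close> x by (rule integral_far_kernel_ge)
  ultimately show ?thesis
    unfolding r_def by (simp add: algebra_simps)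
qed

lemma Liminf_LK_ge:
  fixes u \<psi> M :: "real \<Rightarrow> real"
  assumes deriv: "\<And>y. (u has_real_derivative deriv u y) (at y)"
    and nonneg: "\<And>y. 0 \<le> u y" and bounded: "\<And>y. u y \<le> B"
    and \<psi>: "weak_second_deriv u \<psi>"
    and M: "\<And>x. 0 \<le> M x" "((\<lambda>x. \<bar>x\<bar> ^ 3 * M x) \<longlongrightarrow> 0) at_infinity"
    and \<psi>_bound: "\<forall>\<^sub>F x in at_infinity. AE y in lborel. y \<in> ball x (\<bar>x\<bar> / 2) \<longrightarrow> \<bar>\<psi> y\<bar> \<le> M x"
    and decay: "((\<lambda>x. \<bar>x\<bar> * u x) \<longlongrightarrow> 0) at_infinity"
    and "0 < R"
  shows "ereal (lam * integral {-R..R} u)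
           \<le> Liminf at_infinity (\<lambda>x. ereal (\<bar>x\<bar> powr (1 + 2 * s) * LK K u x))"
proof -
  define lower where "lower x = lam * (\<bar>x\<bar> / (\<bar>x\<bar> + R)) powr (1 + 2 * s) * integral {-R..R} u
      - (\<bar>x\<bar> * u x) * (Lam * 2 powr (2 * s) / s)
      - (\<bar>x\<bar> ^ 3 * M x) * (Lam * 2 powr (2 * s - 2) / (1 - s))" for x
  have below: "\<forall>\<^sub>F x in at_infinity. lower x \<le> \<bar>x\<bar> powr (1 + 2 * s) * LK K u x"
  proof -
    have "\<forall>\<^sub>F x in at_infinity. 2 * R \<le> \<bar>x\<bar>"
      unfolding eventually_at_infinity by (auto intro!: exI[of _ "2 * R"])
    with \<psi>_bound show ?thesis
    proof eventually_elim
      case (elim x)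
      then have "0 < \<bar>x\<bar>"
        using \<open>0 < R\<close> by linarith
      have "\<bar>x\<bar> powr (1 + 2 * s) * (lam * (\<bar>x\<bar> + R) powr - (1 + 2 * s) * integral {-R..R} u
          - u x * Lam * (\<bar>x\<bar> / 2) powr (- 2 * s) / s
          - M x * Lam * (\<bar>x\<bar> / 2) powr (2 - 2 * s) / (1 - s)) \<le> \<bar>x\<bar> powr (1 + 2 * s) * LK K u x"
        using elim M(1) \<open>0 < R\<close>
        by (intro mult_left_mono LK_lower_bound[OF deriv nonneg bounded \<psi>]) auto
      moreover have "\<bar>x\<bar> powr (1 + 2 * s) * (\<bar>x\<bar> + R) powr - (1 + 2 * s)
          = (\<bar>x\<bar> / (\<bar>x\<bar> + R)) powr (1 + 2 * s)"
        using \<open>0 < R\<close> by (simp only: powr_minus) (simp add: powr_divide inverse_eq_divide)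
      moreover have "\<bar>x\<bar> powr (1 + 2 * s) * (\<bar>x\<bar> / 2) powr (- 2 * s) = \<bar>x\<bar> * 2 powr (2 * s)"
        using powr_mult_half_powr[OF \<open>0 < \<bar>x\<bar>\<close>] by simp
      moreover have "\<bar>x\<bar> powr (1 + 2 * s) * (\<bar>x\<bar> / 2) powr (2 - 2 * s) = \<bar>x\<bar> ^ 3 * 2 powr (2 * s - 2)"
        using powr_mult_half_powr[OF \<open>0 < \<bar>x\<bar>\<close>] \<open>0 < \<bar>x\<bar>\<close> by (simp add: powr_numeral)
      ultimately show ?case
        unfolding lower_def by (simp add: algebra_simps)
    qed
  qed
  have "(lower \<longlongrightarrow> lam * 1 powr (1 + 2 * s) * integral {-R..R} u - 0 * (Lam * 2 powr (2 * s) / s)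
      - 0 * (Lam * 2 powr (2 * s - 2) / (1 - s))) at_infinity"
    unfolding lower_def
  proof (intro tendsto_intros decay M(2))
    have "filterlim (\<lambda>x::real. \<bar>x\<bar> + R) at_top at_infinity"
      using filterlim_tendsto_add_at_top[OF tendsto_const filterlim_norm_at_top[where 'a=real], of R]
      by (simp add: add.commute real_norm_def)
    then have "((\<lambda>x. 1 - R / (\<bar>x\<bar> + R)) \<longlongrightarrow> 1 - 0) at_infinity"
      by (intro tendsto_intros tendsto_divide_0[OF tendsto_const] filterlim_at_top_imp_at_infinity)
    moreover have "\<forall>\<^sub>F x in at_infinity. 1 - R / (\<bar>x\<bar> + R) = \<bar>x\<bar> / (\<bar>x\<bar> + R)"
      using \<open>0 < R\<close> by (intro always_eventually allI) (simp add: field_simps)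
    ultimately show "((\<lambda>x. \<bar>x\<bar> / (\<bar>x\<bar> + R)) \<longlongrightarrow> 1) at_infinity"
      by (simp add: tendsto_cong)
  qed simp
  then have "Liminf at_infinity (\<lambda>x. ereal (lower x)) = ereal (lam * integral {-R..R} u)"
    by (intro lim_imp_Liminf) (simp_all add: lim_ereal trivial_limit_at_infinity)
  moreover have "Liminf at_infinity (\<lambda>x. ereal (lower x))
      \<le> Liminf at_infinity (\<lambda>x. ereal (\<bar>x\<bar> powr (1 + 2 * s) * LK K u x))"
    using below by (intro Liminf_mono) (simp add: eventually_mono)
  ultimately show ?thesis
    by simp
qed

end

lemma Linf_on_ball_bound_at_infinity:
  fixes \<psi> :: "real \<Rightarrow> real"
  assumes top: "((\<lambda>x. ereal (x ^ 3) * Linf_on \<psi> {x/2<..<3*x/2}) \<longlongrightarrow> 0) at_top"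
    and bot: "((\<lambda>x. ereal (x ^ 3) * Linf_on \<psi> {3*x/2<..<x/2}) \<longlongrightarrow> 0) at_bot"
  obtains M where "\<And>x. 0 \<le> M x" "((\<lambda>x. \<bar>x\<bar> ^ 3 * M x) \<longlongrightarrow> 0) at_infinity"
    "\<forall>\<^sub>F x in at_infinity. AE y in lborel. y \<in> ball x (\<bar>x\<bar> / 2) \<longrightarrow> \<bar>\<psi> y\<bar> \<le> M x"
proof -
  define L where "L x = Linf_on \<psi> (ball x (\<bar>x\<bar> / 2))" for x
  have "((\<lambda>x. ereal (x ^ 3) * L x) \<longlongrightarrow> 0) at_infinity"
    unfolding at_infinity_eq_at_top_bot
  proof (rule filterlim_sup)
    show "((\<lambda>x. ereal (x ^ 3) * L x) \<longlongrightarrow> 0) at_top"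
      using top eventually_gt_at_top[of 0]
      by (rule Lim_transform_eventually[OF _ eventually_mono])
         (simp add: L_def ball_eq_greaterThanLessThan)
    show "((\<lambda>x. ereal (x ^ 3) * L x) \<longlongrightarrow> 0) at_bot"
      using bot eventually_gt_at_bot[of 0]
      by (rule Lim_transform_eventually[OF _ eventually_mono])
         (simp add: L_def ball_eq_greaterThanLessThan)
  qed
  from ereal_cube_tendsto_0_imp_real[OF this eventually_not_equal_at_infinity]
  have lim: "((\<lambda>x. \<bar>x\<bar> ^ 3 * max 0 (real_of_ereal (L x))) \<longlongrightarrow> 0) at_infinity"
    and finite: "\<forall>\<^sub>F x in at_infinity. \<bar>L x\<bar> \<noteq> \<infinity>" .
  have "\<forall>\<^sub>F x in at_infinity. AE y in lborel.
      y \<in> ball x (\<bar>x\<bar> / 2) \<longrightarrow> \<bar>\<psi> y\<bar> \<le> max 0 (real_of_ereal (L x))"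
    using finite
  proof eventually_elim
    case (elim x)
    then obtain c where c: "L x = ereal c"
      by (cases "L x") auto
    have "AE y in lborel. y \<in> ball x (\<bar>x\<bar> / 2) \<longrightarrow> ereal \<bar>\<psi> y\<bar> \<le> L x"
      unfolding L_def by (rule AE_le_Linf_on) simp
    then show ?case
      unfolding c by eventually_elim auto
  qed
  with lim show ?thesis
    by (intro that[of "\<lambda>x. max 0 (real_of_ereal (L x))"]) auto
qed

theorem proposition3p3:
  fixes s lam Lam Cbar \<kappa> \<sigma> \<tau> \<gamma> :: real
    and K :: "real \<Rightarrow> ennreal" and \<phi> \<psi> :: "real \<Rightarrow> real"
  assumes s: "0 < s" "s < 1"
    and K_meas: "K \<in> borel_measurable borel"
    and K_sym: "AE x in lborel. K x = K (- x)"
    and lamLam: "0 < lam" "lam \<le> Lam"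
    and K_bounds: "AE x in lborel. ennreal (lam * abs x powr (- (1 + 2 * s))) \<le> K x
                                   \<and> K x \<le> ennreal (Lam * abs x powr (- (1 + 2 * s)))"
    and params: "0 < Cbar" "0 < \<kappa>" "1 < \<sigma>" "1 < \<tau>" "0 < \<gamma>"
    and phi_C11: "C11 \<phi>"
    and phi_left: "\<And>x. x < - \<kappa> \<Longrightarrow> \<phi> x \<ge> Cbar * abs x powr (- \<sigma>)"
    and phi_right: "\<And>x. x > \<kappa> \<Longrightarrow> \<phi> x \<ge> Cbar * abs x powr (- \<tau>)"
    and phi_mid: "\<And>x. x \<in> {-\<kappa>..\<kappa>} \<Longrightarrow> \<phi> x \<ge> \<gamma>"
    and phi_decay_top: "((\<lambda>x. \<bar>x\<bar> * \<phi> x) \<longlongrightarrow> 0) at_top"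
    and phi_decay_bot: "((\<lambda>x. \<bar>x\<bar> * \<phi> x) \<longlongrightarrow> 0) at_bot"
    and psi: "weak_second_deriv \<phi> \<psi>"
    and psi_top: "((\<lambda>x. ereal (x ^ 3) * Linf_on \<psi> {x/2<..<3*x/2}) \<longlongrightarrow> 0) at_top"
    and psi_bot: "((\<lambda>x. ereal (x ^ 3) * Linf_on \<psi> {3*x/2<..<x/2}) \<longlongrightarrow> 0) at_bot"
  shows "Liminf at_infinity (\<lambda>x. ereal (abs x powr (1 + 2 * s) * LK K \<phi> x))
           \<ge> ereal (lam * (Cbar * \<kappa> powr (1 - \<sigma>) / (\<sigma> - 1) + integral {-\<kappa>..\<kappa>} \<phi>
                          + Cbar * \<kappa> powr (1 - \<tau>) / (\<tau> - 1)))"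
proof -
  interpret stable_kernel s lam Lam K
    using s K_meas K_sym lamLam K_bounds by unfold_locales
  obtain B where bounded: "\<And>y. \<bar>\<phi> y\<bar> \<le> B"
    using phi_C11 unfolding C11_def bounded_iff by auto
  have deriv: "\<And>y. (\<phi> has_real_derivative deriv \<phi> y) (at y)"
    using phi_C11 unfolding C11_def by (simp add: DERIV_deriv_iff_real_differentiable)
  have cont: "continuous_on UNIV \<phi>"
    using deriv by (meson DERIV_continuous continuous_at_imp_continuous_on)
  have nonneg: "0 \<le> \<phi> y" for y
    using phi_left[of y] phi_right[of y] phi_mid[of y] params
    by (smt (verit) atLeastAtMost_iff mult_nonneg_nonneg powr_ge_zero)
  obtain M where M: "\<And>x. 0 \<le> M x" "((\<lambda>x. \<bar>x\<bar> ^ 3 * M x) \<longlongrightarrow> 0) at_infinity"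
    "\<forall>\<^sub>F x in at_infinity. AE y in lborel. y \<in> ball x (\<bar>x\<bar> / 2) \<longrightarrow> \<bar>\<psi> y\<bar> \<le> M x"
    using Linf_on_ball_bound_at_infinity[OF psi_top psi_bot] by blast
  have decay: "((\<lambda>x. \<bar>x\<bar> * \<phi> x) \<longlongrightarrow> 0) at_infinity"
    unfolding at_infinity_eq_at_top_bot using phi_decay_top phi_decay_bot by (rule filterlim_sup)
  have "ereal (lam * integral {-R..R} \<phi>)
      \<le> Liminf at_infinity (\<lambda>x. ereal (\<bar>x\<bar> powr (1 + 2 * s) * LK K \<phi> x))" if "\<kappa> \<le> R" for R
    using bounded params that
    by (intro Liminf_LK_ge[OF deriv nonneg _ psi M decay]) (auto simp: abs_le_iff)
  then show ?thesis
    using cont params lamLam phi_left phi_right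
    by (intro ereal_le_if_truncated_integrals_le[where C=Cbar]) auto
qed

end
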